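(* Let $C$ be a cone in $\mathbb{R}^n$ and let $X$ and $Y$ be nonempty decomposably $C$-antichain-convex subsets of $\mathbb{R}^n$. (1) If $X$ is $C$-upward and $\operatorname{ri}(X)\cap Y=\emptyset$, then $X$ and $Y$ are properly separated. (2) If $X$ is $C$-downward and $\operatorname{ri}(X)\cap Y=\emptyset$, then $X$ and $Y$ are properly separated.
   Context: A cone in $\mathbb{R}^n$ is a subset $C$ with $\lambda C\subseteq C$ for all $\lambda>0$ (possibly empty, need not contain $0$). $S$ is $C$-antichain-convex iff for all $x,y\in S$ and $\lambda\in[0,1]$ with $y-x\notin C\cup(-C)$ one has $\lambda x+(1-\lambda)y\in S$; $S$ is decomposably $C$-antichain-convex iff it is a Minkowski sum of finitely many $C$-antichain-convex sets. $S$ is $C$-upward iff $S+C\subseteq S$; $C$-downward iff $S-C\subseteq S$. $\operatorname{ri}(Z)$ is the relative interior of $Z$ (interior relative to its affine hull). $X$ and $Y$ are properly separated iff there is a linear functional $f$ on $\mathbb{R}^n$ with $\sup f[X]\le\inf f[Y]$ and $\inf f[X]<\sup f[Y]$. *)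

theory Defs
  imports "HOL-Analysis.Analysis"
begin

definition is_cone :: "('a::real_vector) set \<Rightarrow> bool" where
  "is_cone C \<longleftrightarrow> (\<forall>t::real. t > 0 \<longrightarrow> (\<forall>c\<in>C. t *\<^sub>R c \<in> C))"

definition antichain_convex :: "('a::real_vector) set \<Rightarrow> 'a set \<Rightarrow> bool" where
  "antichain_convex C S \<longleftrightarrow>
     (\<forall>x\<in>S. \<forall>y\<in>S. \<forall>t::real. 0 \<le> t \<and> t \<le> 1 \<and> y - x \<notin> C \<union> uminus ` C
        \<longrightarrow> t *\<^sub>R x + (1 - t) *\<^sub>R y \<in> S)"

definition minkowski_sum :: "'i set \<Rightarrow> ('i \<Rightarrow> ('a::real_vector) set) \<Rightarrow> 'a set" where
  "minkowski_sum I S = {\<Sum>i\<in>I. x i | x. \<forall>i\<in>I. x i \<in> S i}"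

definition decomp_antichain_convex :: "('a::real_vector) set \<Rightarrow> 'a set \<Rightarrow> bool" where
  "decomp_antichain_convex C X \<longleftrightarrow>
     (\<exists>(I::nat set) S. finite I \<and> I \<noteq> {} \<and> (\<forall>i\<in>I. antichain_convex C (S i))
        \<and> X = minkowski_sum I S)"

definition upward :: "('a::real_vector) set \<Rightarrow> 'a set \<Rightarrow> bool" where
  "upward C S \<longleftrightarrow> (\<forall>s\<in>S. \<forall>c\<in>C. s + c \<in> S)"

definition downward :: "('a::real_vector) set \<Rightarrow> 'a set \<Rightarrow> bool" where
  "downward C S \<longleftrightarrow> (\<forall>s\<in>S. \<forall>c\<in>C. s - c \<in> S)"

definition properly_separated :: "('a::real_vector) set \<Rightarrow> 'a set \<Rightarrow> bool" where
  "properly_separated X Y \<longleftrightarrow>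
     (\<exists>f::'a \<Rightarrow> real. linear f
        \<and> (SUP x\<in>X. ereal (f x)) \<le> (INF y\<in>Y. ereal (f y))
        \<and> (INF x\<in>X. ereal (f x)) < (SUP y\<in>Y. ereal (f y)))"

end

theory Submission
  imports Defs
begin

text \<open>If a and b are comparable points of an antichain-convex set, adding a
nonnegative multiple of their difference (an element of C or 0) moves a convex combination of
them to one of the endpoints; if they are incomparable, the combination already lies in the
set. Summing over a decomposition, a convex combination of two points of a decomposably
C-antichain-convex set lands in the set after a translation by a finite sum of elements of C.
For C-upward X this, applied to the cone -C, shows that X is convex; applied to Y, it shows
that every point of conv Y is moved into Y by a translation from the convex monoid
{k. X + k \<subseteq> X}. Such translations preserve ri X, so ri X misses conv Y. A hyperplane
separating ri X from conv Y whose normal lies in the span of their difference set then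
separates X and Y properly. The downward case is the upward case for the cone -C.\<close>

definition convex_up_to :: "('a::real_vector) set \<Rightarrow> 'a set \<Rightarrow> bool" where
  "convex_up_to K S \<longleftrightarrow>
     (\<forall>x\<in>S. \<forall>y\<in>S. \<forall>t::real. 0 \<le> t \<and> t \<le> 1
        \<longrightarrow> (\<exists>k\<in>K. t *\<^sub>R x + (1 - t) *\<^sub>R y + k \<in> S))"

lemma convex_up_toD:
  "convex_up_to K S \<Longrightarrow> x \<in> S \<Longrightarrow> y \<in> S \<Longrightarrow> 0 \<le> t \<Longrightarrow> t \<le> 1
    \<Longrightarrow> \<exists>k\<in>K. t *\<^sub>R x + (1 - t) *\<^sub>R y + k \<in> S"
  unfolding convex_up_to_def by blast

lemma is_cone_uminus: "is_cone C \<Longrightarrow> is_cone (uminus ` C)"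
  unfolding is_cone_def by (auto simp: image_iff)

lemma antichain_convex_uminus: "antichain_convex (uminus ` C) S \<longleftrightarrow> antichain_convex C S"
proof -
  have "uminus ` C \<union> uminus ` uminus ` C = C \<union> uminus ` C"
    by (auto simp: image_image)
  then show ?thesis
    unfolding antichain_convex_def by (simp only:)
qed

lemma decomp_antichain_convex_uminus:
  "decomp_antichain_convex (uminus ` C) X \<longleftrightarrow> decomp_antichain_convex C X"
  unfolding decomp_antichain_convex_def antichain_convex_uminus ..

lemma upward_uminus: "upward (uminus ` C) X \<longleftrightarrow> downward C X"
  unfolding upward_def downward_def by auto

lemma is_cone_scaleR_insert_0:
  assumes "is_cone C" "0 \<le> t" "c \<in> insert 0 C"
  shows "t *\<^sub>R c \<in> insert 0 C"
  using assms unfolding is_cone_def by (cases "t = 0") auto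

lemma antichain_convex_imp_convex_up_to:
  assumes cone: "is_cone C" and ac: "antichain_convex C S"
  shows "convex_up_to (insert 0 C) S"
  unfolding convex_up_to_def
proof (intro ballI allI impI)
  fix a b and t :: real
  assume a: "a \<in> S" and b: "b \<in> S" and t: "0 \<le> t \<and> t \<le> 1"
  have "b - a \<in> uminus ` C \<longleftrightarrow> a - b \<in> C"
    by (metis minus_diff_eq inj_image_mem_iff inj_uminus)
  then consider "b - a \<notin> C \<union> uminus ` C" | "b - a \<in> C" | "a - b \<in> C"
    by blast
  then show "\<exists>k\<in>insert 0 C. t *\<^sub>R a + (1 - t) *\<^sub>R b + k \<in> S"
  proof cases
    case 1
    then have "t *\<^sub>R a + (1 - t) *\<^sub>R b + 0 \<in> S"
      using ac a b t unfolding antichain_convex_def by simp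
    then show ?thesis by blast
  next
    case 2
    have "t *\<^sub>R (b - a) \<in> insert 0 C"
      using is_cone_scaleR_insert_0[OF cone] 2 t by blast
    moreover have "t *\<^sub>R a + (1 - t) *\<^sub>R b + t *\<^sub>R (b - a) \<in> S"
      using b by (simp add: algebra_simps)
    ultimately show ?thesis by blast
  next
    case 3
    have "0 \<le> 1 - t"
      using t by simp
    then have "(1 - t) *\<^sub>R (a - b) \<in> insert 0 C"
      using is_cone_scaleR_insert_0[OF cone] 3 by blast
    moreover have "t *\<^sub>R a + (1 - t) *\<^sub>R b + (1 - t) *\<^sub>R (a - b) \<in> S"
      using a by (simp add: algebra_simps)
    ultimately show ?thesis by blast
  qed
qed

lemma convex_up_to_mono: "convex_up_to K S \<Longrightarrow> K \<subseteq> L \<Longrightarrow> convex_up_to L S"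
  unfolding convex_up_to_def by blast

lemma sum_mem_if_add_closed:
  assumes "finite I" "0 \<in> K" "\<And>a b. a \<in> K \<Longrightarrow> b \<in> K \<Longrightarrow> a + b \<in> K" "\<And>i. i \<in> I \<Longrightarrow> f i \<in> K"
  shows "sum f I \<in> K"
  using assms by (induction I rule: finite_induct) auto

lemma convex_up_to_minkowski_sum:
  assumes fin: "finite I" and K0: "0 \<in> K" and Kadd: "\<And>a b. a \<in> K \<Longrightarrow> b \<in> K \<Longrightarrow> a + b \<in> K"
    and S: "\<And>i. i \<in> I \<Longrightarrow> convex_up_to K (S i)"
  shows "convex_up_to K (minkowski_sum I S)"
  unfolding convex_up_to_def
proof (intro ballI allI impI)
  fix x y and t :: real
  assume "x \<in> minkowski_sum I S" "y \<in> minkowski_sum I S" and t: "0 \<le> t \<and> t \<le> 1"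
  then obtain a b where a: "x = (\<Sum>i\<in>I. a i)" "\<forall>i\<in>I. a i \<in> S i"
    and b: "y = (\<Sum>i\<in>I. b i)" "\<forall>i\<in>I. b i \<in> S i"
    unfolding minkowski_sum_def by blast
  have "\<forall>i\<in>I. \<exists>k\<in>K. t *\<^sub>R a i + (1 - t) *\<^sub>R b i + k \<in> S i"
    using S a b t unfolding convex_up_to_def by blast
  then obtain k where k: "\<And>i. i \<in> I \<Longrightarrow> k i \<in> K \<and> t *\<^sub>R a i + (1 - t) *\<^sub>R b i + k i \<in> S i"
    by metis
  have "sum k I \<in> K"
    using sum_mem_if_add_closed[OF fin K0 Kadd] k by blast
  moreover have "t *\<^sub>R x + (1 - t) *\<^sub>R y + sum k I = (\<Sum>i\<in>I. t *\<^sub>R a i + (1 - t) *\<^sub>R b i + k i)"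
    by (simp add: a b sum.distrib scaleR_sum_right)
  moreover have "(\<Sum>i\<in>I. t *\<^sub>R a i + (1 - t) *\<^sub>R b i + k i) \<in> minkowski_sum I S"
    unfolding minkowski_sum_def using k by blast
  ultimately show "\<exists>k\<in>K. t *\<^sub>R x + (1 - t) *\<^sub>R y + k \<in> minkowski_sum I S"
    by metis
qed

lemma decomp_antichain_convex_imp_convex_up_to:
  assumes "is_cone C" "decomp_antichain_convex C X"
    and "0 \<in> K" "\<And>a b. a \<in> K \<Longrightarrow> b \<in> K \<Longrightarrow> a + b \<in> K" "C \<subseteq> K"
  shows "convex_up_to K X"
proof -
  obtain I :: "nat set" and S where I: "finite I" and S: "\<forall>i\<in>I. antichain_convex C (S i)"
    and X: "X = minkowski_sum I S"
    using assms(2) unfolding decomp_antichain_convex_def by blast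
  have "insert 0 C \<subseteq> K"
    using assms(3,5) by blast
  then have "convex_up_to K (S i)" if "i \<in> I" for i
    using antichain_convex_imp_convex_up_to[OF assms(1)] S that convex_up_to_mono by blast
  then show ?thesis
    unfolding X using convex_up_to_minkowski_sum[OF I assms(3,4)] by blast
qed

lemma convex_hull_subset_if_convex_up_to:
  assumes up_to: "convex_up_to K S" and "convex K" "0 \<in> K"
    and Kadd: "\<And>a b. a \<in> K \<Longrightarrow> b \<in> K \<Longrightarrow> a + b \<in> K"
  shows "convex hull S \<subseteq> {z. \<exists>k\<in>K. z + k \<in> S}" (is "_ \<subseteq> ?T")
proof (rule hull_minimal)
  show "S \<subseteq> ?T"
    using \<open>0 \<in> K\<close> by force
  show "convex ?T"
  proof (rule convexI)
    fix z1 z2 and u v :: real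
    assume "z1 \<in> ?T" "z2 \<in> ?T" and uv: "0 \<le> u" "0 \<le> v" "u + v = 1"
    then obtain k1 k2 where k: "k1 \<in> K" "k2 \<in> K" "z1 + k1 \<in> S" "z2 + k2 \<in> S"
      by blast
    have "v = 1 - u"
      using uv by simp
    then obtain k where "k \<in> K" and k_in: "u *\<^sub>R (z1 + k1) + v *\<^sub>R (z2 + k2) + k \<in> S"
      using convex_up_toD[OF up_to k(3,4), of u] uv by auto
    moreover have "u *\<^sub>R k1 + v *\<^sub>R k2 \<in> K"
      using \<open>convex K\<close> k uv unfolding convex_def by blast
    ultimately have "u *\<^sub>R k1 + v *\<^sub>R k2 + k \<in> K"
      using Kadd by blast
    moreover have "u *\<^sub>R z1 + v *\<^sub>R z2 + (u *\<^sub>R k1 + v *\<^sub>R k2 + k) \<in> S"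
      using k_in by (simp add: algebra_simps)
    ultimately show "u *\<^sub>R z1 + v *\<^sub>R z2 \<in> ?T"
      by blast
  qed
qed

lemma decomp_antichain_convex_upward_imp_convex:
  assumes "is_cone C" "decomp_antichain_convex C X" "upward C X"
  shows "convex X"
proof -
  let ?K = "{k. \<forall>x\<in>X. x - k \<in> X}"
  have "0 \<in> ?K"
    by simp
  moreover have "a + b \<in> ?K" if "a \<in> ?K" "b \<in> ?K" for a b
    using that by (auto simp flip: diff_diff_eq)
  moreover have "uminus ` C \<subseteq> ?K"
    using \<open>upward C X\<close> unfolding upward_def by auto
  ultimately have up_to: "convex_up_to ?K X"
    using decomp_antichain_convex_imp_convex_up_to[of "uminus ` C" X ?K] assms(1,2)
    by (simp add: is_cone_uminus decomp_antichain_convex_uminus)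
  show "convex X"
  proof (rule convexI)
    fix x y and u v :: real
    assume "x \<in> X" "y \<in> X" "0 \<le> u" "0 \<le> v" "u + v = 1"
    moreover have "v = 1 - u"
      using \<open>u + v = 1\<close> by simp
    ultimately obtain k where "k \<in> ?K" "u *\<^sub>R x + v *\<^sub>R y + k \<in> X"
      using convex_up_toD[OF up_to, of x y u] by auto
    then have "(u *\<^sub>R x + v *\<^sub>R y + k) - k \<in> X"
      by blast
    then show "u *\<^sub>R x + v *\<^sub>R y \<in> X"
      by simp
  qed
qed

lemma convex_translation_stabilizer:
  assumes "convex X"
  shows "convex {k. \<forall>x\<in>X. x + k \<in> X}"
proof (rule convexI)
  fix k1 k2 and u v :: real
  assume k: "k1 \<in> {k. \<forall>x\<in>X. x + k \<in> X}" "k2 \<in> {k. \<forall>x\<in>X. x + k \<in> X}"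
    and uv: "0 \<le> u" "0 \<le> v" "u + v = 1"
  have "x + (u *\<^sub>R k1 + v *\<^sub>R k2) \<in> X" if "x \<in> X" for x
  proof -
    have "x + (u *\<^sub>R k1 + v *\<^sub>R k2) = u *\<^sub>R (x + k1) + v *\<^sub>R (x + k2)"
      using uv by (simp add: algebra_simps flip: scaleR_add_left)
    moreover have "x + k1 \<in> X" "x + k2 \<in> X"
      using k that by auto
    ultimately show ?thesis
      using \<open>convex X\<close> uv unfolding convex_def by metis
  qed
  then show "u *\<^sub>R k1 + v *\<^sub>R k2 \<in> {k. \<forall>x\<in>X. x + k \<in> X}"
    by blast
qed

lemma rel_interior_translate_mem:
  fixes X :: "'a::euclidean_space set"
  assumes "convex X" and k: "\<And>x. x \<in> X \<Longrightarrow> x + k \<in> X" and x: "x \<in> rel_interior X"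
  shows "x + k \<in> rel_interior X"
proof -
  have "x + k + k \<in> closure X"
    using k x rel_interior_subset closure_subset by blast
  then have "(x + k + k) - (1/2) *\<^sub>R ((x + k + k) - x) \<in> rel_interior X"
    by (rule rel_interior_closure_convex_shrink[OF \<open>convex X\<close> x]) simp_all
  moreover have "(x + k + k) - (1/2) *\<^sub>R ((x + k + k) - x) = x + k"
    by (simp add: algebra_simps flip: scaleR_2)
  ultimately show ?thesis
    by simp
qed

lemma properly_separatedI:
  fixes a :: "'a::real_inner"
  assumes "\<And>x y. x \<in> X \<Longrightarrow> y \<in> Y \<Longrightarrow> a \<bullet> x \<le> a \<bullet> y"
    and "x0 \<in> X" "y0 \<in> Y" "a \<bullet> x0 < a \<bullet> y0"
  shows "properly_separated X Y"
  unfolding properly_separated_def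
proof (intro exI[of _ "\<lambda>z. a \<bullet> z"] conjI)
  show "linear ((\<bullet>) a)"
    by (rule bounded_linear.linear[OF bounded_linear_inner_right])
  show "(SUP x\<in>X. ereal (a \<bullet> x)) \<le> (INF y\<in>Y. ereal (a \<bullet> y))"
    by (intro SUP_least INF_greatest) (simp add: assms(1))
  have "(INF x\<in>X. ereal (a \<bullet> x)) \<le> ereal (a \<bullet> x0)"
    using \<open>x0 \<in> X\<close> by (rule INF_lower)
  also have "\<dots> < ereal (a \<bullet> y0)"
    using assms(4) by simp
  also have "\<dots> \<le> (SUP y\<in>Y. ereal (a \<bullet> y))"
    using \<open>y0 \<in> Y\<close> by (rule SUP_upper)
  finally show "(INF x\<in>X. ereal (a \<bullet> x)) < (SUP y\<in>Y. ereal (a \<bullet> y))" .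
qed

lemma convex_subset_halfspace_if_rel_interior:
  fixes X :: "'a::euclidean_space set"
  assumes "convex X" "rel_interior X \<subseteq> {z. a \<bullet> z \<le> c}"
  shows "X \<subseteq> {z. a \<bullet> z \<le> c}"
proof -
  have "closure (rel_interior X) \<subseteq> {z. a \<bullet> z \<le> c}"
    using assms(2) closed_halfspace_le by (rule closure_minimal)
  then show ?thesis
    using convex_closure_rel_interior[OF assms(1)] closure_subset by blast
qed

lemma properly_separated_if_rel_interior_disjoint_hull:
  fixes X Y :: "'a::euclidean_space set"
  assumes "convex X" "X \<noteq> {}" "Y \<noteq> {}" and disj: "rel_interior X \<inter> convex hull Y = {}"
  shows "properly_separated X Y"
proof -
  define D where "D = (\<Union>y\<in>convex hull Y. \<Union>x\<in>rel_interior X. {y - x})"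
  have "convex D"
    unfolding D_def using convex_differences convex_rel_interior[OF assms(1)] by blast
  moreover have "D \<noteq> {}"
    unfolding D_def using assms(1-3) rel_interior_eq_empty by fastforce
  moreover have "0 \<notin> D"
    unfolding D_def using disj by auto
  ultimately obtain a where a: "a \<in> span D" "a \<noteq> 0" and D: "\<And>d. d \<in> D \<Longrightarrow> 0 \<le> a \<bullet> d"
    using separating_hyperplane_set_0_inspan by metis
  have ri_le: "a \<bullet> x \<le> a \<bullet> y" if "x \<in> rel_interior X" "y \<in> convex hull Y" for x y
    using D[of "y - x"] that unfolding D_def by (auto simp: inner_diff_right)
  have le: "a \<bullet> x \<le> a \<bullet> y" if "x \<in> X" "y \<in> Y" for x y
    using convex_subset_halfspace_if_rel_interior[OF assms(1), of a "a \<bullet> y"]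
      ri_le hull_inc[OF \<open>y \<in> Y\<close>] \<open>x \<in> X\<close> by blast
  have "\<exists>x\<in>X. \<exists>y\<in>Y. a \<bullet> x < a \<bullet> y"
  proof (rule ccontr)
    assume "\<not> ?thesis"
    then have "Y \<subseteq> {z. a \<bullet> z \<le> a \<bullet> x}" if "x \<in> X" for x
      using that by (auto simp: not_less)
    then have "convex hull Y \<subseteq> {z. a \<bullet> z \<le> a \<bullet> x}" if "x \<in> X" for x
      using that by (simp add: convex_halfspace_le hull_minimal)
    then have "orthogonal a d" if "d \<in> D" for d
      using that ri_le rel_interior_subset
      unfolding D_def by (fastforce simp: orthogonal_def inner_diff_right)
    then have "orthogonal a a"
      by (rule orthogonal_to_span[OF a(1)])
    then show False
      using a(2) by (simp add: orthogonal_def)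
  qed
  then show ?thesis
    using le properly_separatedI by metis
qed

lemma properly_separated_if_upward:
  fixes C X Y :: "'a::euclidean_space set"
  assumes cone: "is_cone C" and "X \<noteq> {}" "Y \<noteq> {}"
    and dX: "decomp_antichain_convex C X" and dY: "decomp_antichain_convex C Y"
    and up: "upward C X" and disj: "rel_interior X \<inter> Y = {}"
  shows "properly_separated X Y"
proof -
  have "convex X"
    using decomp_antichain_convex_upward_imp_convex[OF cone dX up] .
  define K where "K = {k. \<forall>x\<in>X. x + k \<in> X}"
  have "convex K"
    unfolding K_def using \<open>convex X\<close> by (rule convex_translation_stabilizer)
  have "0 \<in> K" and K_add: "\<And>a b. a \<in> K \<Longrightarrow> b \<in> K \<Longrightarrow> a + b \<in> K" and "C \<subseteq> K"
    using up unfolding K_def upward_def by (auto simp flip: add.assoc)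
  then have "convex_up_to K Y"
    using decomp_antichain_convex_imp_convex_up_to[OF cone dY] by blast
  then have hull: "convex hull Y \<subseteq> {z. \<exists>k\<in>K. z + k \<in> Y}"
    using convex_hull_subset_if_convex_up_to \<open>convex K\<close> \<open>0 \<in> K\<close> K_add by blast
  have "z \<notin> convex hull Y" if "z \<in> rel_interior X" for z
  proof
    assume "z \<in> convex hull Y"
    then obtain k where "k \<in> K" "z + k \<in> Y"
      using hull by blast
    moreover have "z + k \<in> rel_interior X"
      using rel_interior_translate_mem[OF \<open>convex X\<close> _ that] \<open>k \<in> K\<close> unfolding K_def by blast
    ultimately show False
      using disj by blast
  qed
  then show ?thesis
    using properly_separated_if_rel_interior_disjoint_hull[OF \<open>convex X\<close> assms(2,3)] by blast
qed

theorem corollary4: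
  fixes C X Y :: "(real ^ 'n) set"
  assumes "is_cone C"
    and "X \<noteq> {}" and "Y \<noteq> {}"
    and "decomp_antichain_convex C X" and "decomp_antichain_convex C Y"
  shows "(upward C X \<and> rel_interior X \<inter> Y = {} \<longrightarrow> properly_separated X Y)
       \<and> (downward C X \<and> rel_interior X \<inter> Y = {} \<longrightarrow> properly_separated X Y)"
proof (intro conjI impI)
  assume "upward C X \<and> rel_interior X \<inter> Y = {}"
  then show "properly_separated X Y"
    using properly_separated_if_upward[OF assms] by blast
next
  assume "downward C X \<and> rel_interior X \<inter> Y = {}"
  then show "properly_separated X Y"
    using properly_separated_if_upward[OF is_cone_uminus[OF assms(1)] assms(2,3)] assms(4,5)
    by (simp add: decomp_antichain_convex_uminus upward_uminus)
qed

end
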